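(* Let $D$ be a joint distribution of $(\mathbf{x},y)$ on $\mathbb{R}^d\times\{\pm1\}$ with $\mathbf{x}$-marginal $\mathcal{N}_d=\mathcal{N}(\mathbf{0},\mathbf{I}_d)$, and suppose $D$ satisfies the reliability condition with respect to $f(\mathbf{x})=\mathrm{sign}(\langle\mathbf{w}^*,\mathbf{x}\rangle-t^* )$, where $\mathbf{w}^*$ is a unit vector. Then there exists a polynomial $p:\mathbb{R}\to\mathbb{R}$ of degree at most $k=O({t^*}^2+1)$ such that $\mathbb{E}_{z\sim\mathcal{N}_1}[p(z)]=0$, $\mathbb{E}_{z\sim\mathcal{N}_1}[p^2(z)]=1$, and $\mathbb{E}_{(\mathbf{x},y)\sim D}[y\,p(\langle\mathbf{w}^*,\mathbf{x}\rangle)]=2^{-O({t^*}^2)}\Pr_{(\mathbf{x},y)\sim D}[y=-1]$.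
   Context: A distribution $D$ on $X\times\{\pm1\}$ satisfies the reliability condition with respect to $f:X\to\{\pm1\}$ if $\Pr_{(\mathbf{x},y)\sim D}[f(\mathbf{x})=+1\wedge y=-1]=0$. $\mathcal{N}_1$ is the standard one-dimensional Gaussian. *)

theory Defs
  imports "HOL-Probability.Probability" "HOL-Computational_Algebra.Polynomial"
begin

definition gauss1 :: "real measure" where
  "gauss1 = density lborel (\<lambda>x. ennreal (std_normal_density x))"

text \<open>d-dimensional standard Gaussian N_d = N(0, I_d), on vectors represented as
  functions nat => real supported on coordinates 0..d-1 (product measure).\<close>
definition gauss_vec :: "nat \<Rightarrow> (nat \<Rightarrow> real) measure" where
  "gauss_vec d = PiM {..<d} (\<lambda>_. gauss1)"

definition inner_d :: "nat \<Rightarrow> (nat \<Rightarrow> real) \<Rightarrow> (nat \<Rightarrow> real) \<Rightarrow> real" where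
  "inner_d d w x = (\<Sum>i<d. w i * x i)"

definition halfspace :: "nat \<Rightarrow> (nat \<Rightarrow> real) \<Rightarrow> real \<Rightarrow> (nat \<Rightarrow> real) \<Rightarrow> real" where
  "halfspace d w t x = (if inner_d d w x - t \<ge> 0 then 1 else -1)"

definition reliable :: "('a \<times> real) measure \<Rightarrow> ('a \<Rightarrow> real) \<Rightarrow> bool" where
  "reliable D f \<longleftrightarrow> measure D {z \<in> space D. f (fst z) = 1 \<and> snd z = -1} = 0"

end

theory Submission
  imports Defs
begin

text \<open>
  Take T = max t 1 and m = \<lceil>6 T^2\<rceil>. The polynomial q(z) = z^(2m) (z + T) - T E[z^(2m)] is
  centred under N_1, and since E[z^(2m)] = (2m-1)!! \<ge> m! dominates 4 T^(2m), q stays below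
  -E[z^(2m)]/2 on (-\<infinity>, T); normalised to unit variance it keeps a margin 2^(-O(m)) there.
  Reliability confines y = -1 to \<langle>w, x\<rangle> < t, and \<langle>w, x\<rangle> is N_1-distributed, so y p = p where
  y = 1 and y p = p - 2 p \<ge> p + 2^(-O(m)) where y = -1; integrating and using E p = 0 gives
  the bound.
\<close>

lemma prob_space_gauss1: "prob_space gauss1"
  unfolding gauss1_def by (rule prob_space_normal_density) simp

lemma sets_gauss1 [measurable_cong, simp]: "sets gauss1 = sets borel"
  unfolding gauss1_def by simp

lemma prob_space_gauss_vec: "prob_space (gauss_vec d)"
  unfolding gauss_vec_def by (rule prob_space_PiM) (rule prob_space_gauss1)

lemma borel_measurable_inner_d [measurable]: "inner_d d w \<in> borel_measurable (gauss_vec d)"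
  unfolding inner_d_def gauss_vec_def by measurable

lemma distr_gauss_vec_component:
  "i < d \<Longrightarrow> distr (gauss_vec d) gauss1 (\<lambda>x. x i) = gauss1"
  unfolding gauss_vec_def by (rule distr_PiM_component) (auto intro: prob_space_gauss1)

lemma indep_vars_gauss_vec_components:
  "prob_space.indep_vars (gauss_vec d) (\<lambda>_. gauss1) (\<lambda>i x. x i) {..<d}"
proof (cases "d = 0")
  case True
  then show ?thesis
    using prob_space_gauss_vec by (simp add: prob_space.indep_vars_def prob_space.indep_sets_def)
next
  case False
  interpret prob_space "gauss_vec d" by (rule prob_space_gauss_vec)
  have components: "(\<lambda>x. x i) \<in> measurable (gauss_vec d) gauss1" if "i \<in> {..<d}" for i
    using that unfolding gauss_vec_def by measurable
  have "distr (gauss_vec d) (\<Pi>\<^sub>M i\<in>{..<d}. gauss1) (\<lambda>x. \<lambda>i\<in>{..<d}. x i)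
      = distr (gauss_vec d) (gauss_vec d) (\<lambda>x. x)"
    unfolding gauss_vec_def by (rule distr_cong) (auto simp: space_PiM PiE_def extensional_restrict)
  also have "\<dots> = (\<Pi>\<^sub>M i\<in>{..<d}. distr (gauss_vec d) gauss1 (\<lambda>x. x i))"
    unfolding distr_id unfolding gauss_vec_def
    by (intro PiM_cong) (auto simp: distr_gauss_vec_component[unfolded gauss_vec_def])
  finally show ?thesis
    using False by (subst indep_vars_iff_distr_eq_PiM'[OF _ components]) auto
qed

lemma distributed_gauss_vec_component:
  assumes "i < d"
  shows "distributed (gauss_vec d) lborel (\<lambda>x. x i) std_normal_density"
  unfolding distributed_def
proof (intro conjI)
  have "distr (gauss_vec d) lborel (\<lambda>x. x i) = distr (gauss_vec d) gauss1 (\<lambda>x. x i)"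
    by (rule distr_cong) auto
  then show "distr (gauss_vec d) lborel (\<lambda>x. x i) = density lborel std_normal_density"
    using distr_gauss_vec_component[OF assms] by (simp add: gauss1_def)
  from assms have "i \<in> {..<d}" by simp
  then have "(\<lambda>x. x i) \<in> borel_measurable (gauss_vec d)"
    unfolding gauss_vec_def by measurable
  then show "(\<lambda>x. x i) \<in> measurable (gauss_vec d) lborel" by simp
qed simp_all

lemma distributed_inner_d_gauss_vec:
  assumes unit: "(\<Sum>i<d. (w i)\<^sup>2) = 1"
  shows "distributed (gauss_vec d) lborel (inner_d d w) std_normal_density"
proof -
  interpret prob_space "gauss_vec d" by (rule prob_space_gauss_vec)
  define I where "I = {i. i < d \<and> w i \<noteq> 0}"
  have "finite I" unfolding I_def by simp
  have "(\<Sum>i<d. (w i)\<^sup>2) = (\<Sum>i\<in>I. (w i)\<^sup>2)"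
    unfolding I_def by (rule sum.mono_neutral_right) auto
  with unit have unit_I: "(\<Sum>i\<in>I. \<bar>w i\<bar>\<^sup>2) = 1" by simp
  then have "I \<noteq> {}" by auto
  have indep: "indep_vars (\<lambda>_. borel) (\<lambda>i x. w i * x i) I"
    by (rule indep_vars_compose2[OF indep_vars_subset[OF indep_vars_gauss_vec_components]])
      (auto simp: I_def)
  have normal: "distributed (gauss_vec d) lborel (\<lambda>x. w i * x i) (normal_density 0 \<bar>w i\<bar>)"
    if "i \<in> I" for i
    using normal_density_affine[OF distributed_gauss_vec_component[of i d], of "w i" 0] that
    by (simp add: I_def)
  have "distributed (gauss_vec d) lborel (\<lambda>x. \<Sum>i\<in>I. w i * x i)
      (normal_density (\<Sum>i\<in>I. 0) (sqrt (\<Sum>i\<in>I. \<bar>w i\<bar>\<^sup>2)))"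
    by (rule sum_indep_normal[OF \<open>finite I\<close> \<open>I \<noteq> {}\<close> indep]) (auto simp: I_def normal)
  with unit_I have "distributed (gauss_vec d) lborel (\<lambda>x. \<Sum>i\<in>I. w i * x i) std_normal_density"
    by simp
  moreover have "(\<lambda>x. \<Sum>i\<in>I. w i * x i) = inner_d d w"
    unfolding inner_d_def I_def by (intro ext sum.mono_neutral_left) auto
  ultimately show ?thesis by simp
qed

lemma inner_d_fst_std_normal:
  assumes sets: "sets D = sets (gauss_vec d \<Otimes>\<^sub>M borel)"
    and marginal: "distr D (gauss_vec d) fst = gauss_vec d"
    and unit: "(\<Sum>i<d. (w i)\<^sup>2) = 1"
  shows "(\<lambda>z. inner_d d w (fst z)) \<in> borel_measurable D"
    and "distr D borel (\<lambda>z. inner_d d w (fst z)) = gauss1"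
proof -
  have fst: "fst \<in> measurable D (gauss_vec d)"
    by (subst measurable_cong_sets[OF sets refl]) (rule measurable_fst)
  then show "(\<lambda>z. inner_d d w (fst z)) \<in> borel_measurable D"
    by measurable
  have "distr D borel (\<lambda>z. inner_d d w (fst z)) = distr (distr D (gauss_vec d) fst) borel (inner_d d w)"
    using fst by (simp add: distr_distr comp_def)
  also have "\<dots> = distr (gauss_vec d) lborel (inner_d d w)"
    using marginal by (intro distr_cong) auto
  also have "\<dots> = gauss1"
    using distributed_inner_d_gauss_vec[OF unit] by (simp add: distributed_def gauss1_def)
  finally show "distr D borel (\<lambda>z. inner_d d w (fst z)) = gauss1" .
qed

lemma power_div_fact_le_exp:
  fixes x :: real
  assumes "0 \<le> x"
  shows "x ^ n / fact n \<le> exp x"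
proof -
  have "(\<lambda>k. x ^ k / fact k) sums exp x"
    using exp_converges[of x] by (simp add: divide_inverse_commute)
  then show ?thesis
    using sum_le_suminf[of "\<lambda>k. x ^ k / fact k" "{n}"] assms by (simp add: sums_iff)
qed

lemma fact_ge_power_div_exp_1: "(real n / exp 1) ^ n \<le> fact n"
proof -
  have "real n ^ n / fact n \<le> exp 1 ^ n"
    using power_div_fact_le_exp[of "real n" n] by (simp add: exp_of_nat_mult[symmetric])
  then show ?thesis by (simp add: field_simps)
qed

definition std_normal_even_moment :: "nat \<Rightarrow> real" where
  "std_normal_even_moment k = fact (2 * k) / (2 ^ k * fact k)"

lemma std_normal_even_moment_0 [simp]: "std_normal_even_moment 0 = 1"
  by (simp add: std_normal_even_moment_def)

lemma std_normal_even_moment_Suc: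
  "std_normal_even_moment (Suc k) = (2 * real k + 1) * std_normal_even_moment k"
proof -
  have num: "(fact (2 * Suc k) :: real) = (2 * (real k + 1)) * ((2 * real k + 1) * fact (2 * k))"
    by (simp add: algebra_simps)
  have den: "(2::real) ^ Suc k * fact (Suc k) = (2 * (real k + 1)) * (2 ^ k * fact k)"
    by (simp add: algebra_simps)
  show ?thesis
    unfolding std_normal_even_moment_def num den by (subst mult_divide_mult_cancel_left) simp_all
qed

lemma std_normal_even_moment_pos: "0 < std_normal_even_moment k"
  by (simp add: std_normal_even_moment_def)

lemma fact_le_std_normal_even_moment: "fact k \<le> std_normal_even_moment k"
proof (induction k)
  case (Suc k)
  have "fact (Suc k) = (real k + 1) * fact k" by simp
  also have "\<dots> \<le> (2 * real k + 1) * std_normal_even_moment k"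
    using Suc by (intro mult_mono) auto
  finally show ?case by (simp add: std_normal_even_moment_Suc)
qed simp

lemma std_normal_even_moment_double:
  "std_normal_even_moment m ^ 2 \<le> std_normal_even_moment (2 * m)"
  "std_normal_even_moment (2 * m) \<le> 4 ^ m * std_normal_even_moment m ^ 2"
proof (induction m)
  case (Suc m)
  define A where "A = (4 * real m + 3) * (4 * real m + 1)"
  define B where "B = (2 * real m + 1) ^ 2"
  have "2 * Suc m = Suc (Suc (2 * m))" by simp
  then have double: "std_normal_even_moment (2 * Suc m) = A * std_normal_even_moment (2 * m)"
    unfolding A_def by (simp only: std_normal_even_moment_Suc) (simp add: algebra_simps)
  have square: "std_normal_even_moment (Suc m) ^ 2 = B * std_normal_even_moment m ^ 2"
    unfolding B_def by (simp add: std_normal_even_moment_Suc power_mult_distrib)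
  have "B \<le> A" "A \<le> 4 * B" "0 \<le> B"
    unfolding A_def B_def by (simp_all add: power2_eq_square algebra_simps)
  then show "std_normal_even_moment (Suc m) ^ 2 \<le> std_normal_even_moment (2 * Suc m)"
    unfolding double square using Suc.IH(1) by (intro mult_mono) auto
  have "A * std_normal_even_moment (2 * m) \<le> (4 * B) * (4 ^ m * std_normal_even_moment m ^ 2)"
    using Suc.IH(2) std_normal_even_moment_pos[of "2 * m"] \<open>A \<le> 4 * B\<close> \<open>0 \<le> B\<close>
    by (intro mult_mono) auto
  then show "std_normal_even_moment (2 * Suc m) \<le> 4 ^ Suc m * std_normal_even_moment (Suc m) ^ 2"
    unfolding double square by (simp add: algebra_simps)
qed simp_all

lemma has_bochner_integral_gauss1_power:
  "has_bochner_integral gauss1 (\<lambda>x. x ^ k)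
     (if even k then std_normal_even_moment (k div 2) else 0)"
proof -
  have "has_bochner_integral lborel (\<lambda>x. std_normal_density x *\<^sub>R x ^ k)
      (if even k then std_normal_even_moment (k div 2) else 0)"
  proof (cases "even k")
    case True
    then obtain j where "k = 2 * j" by blast
    then show ?thesis
      using std_normal_moment_even[of j] by (simp add: std_normal_even_moment_def)
  next
    case False
    then obtain j where "k = 2 * j + 1" using oddE by blast
    then show ?thesis using std_normal_moment_odd[of j] by simp
  qed
  then show ?thesis
    unfolding gauss1_def by (intro has_bochner_integral_density) auto
qed

lemma integrable_gauss1_poly: "integrable gauss1 (\<lambda>x. poly p x)"
proof -
  have "integrable gauss1 (\<lambda>x. \<Sum>i\<le>degree p. coeff p i * x ^ i)"
    using has_bochner_integral_gauss1_power by (auto simp: has_bochner_integral_iff)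
  then show ?thesis by (simp add: poly_altdef)
qed

lemma power_le_std_normal_even_moment:
  assumes "1 \<le> T" "6 * T\<^sup>2 \<le> real m"
  shows "4 * T ^ (2 * m) \<le> std_normal_even_moment m"
proof -
  have "1 \<le> T\<^sup>2" using assms(1) by simp
  have "exp 1 * (2 * T\<^sup>2) \<le> 3 * (2 * T\<^sup>2)"
    using exp_le by (intro mult_right_mono) auto
  with assms(2) have "2 * T\<^sup>2 \<le> real m / exp 1"
    by (simp add: pos_le_divide_eq mult.commute)
  then have "(2 * T\<^sup>2) ^ m \<le> (real m / exp 1) ^ m"
    by (intro power_mono) auto
  also have "\<dots> \<le> std_normal_even_moment m"
    using fact_ge_power_div_exp_1 fact_le_std_normal_even_moment by (rule order.trans)
  finally have "2 ^ m * T ^ (2 * m) \<le> std_normal_even_moment m"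
    by (simp add: power_mult_distrib power_mult)
  moreover have "(2::real) \<le> real m"
    using assms(2) \<open>1 \<le> T\<^sup>2\<close> by linarith
  then have "4 * T ^ (2 * m) \<le> 2 ^ m * T ^ (2 * m)"
    using power_increasing[of 2 m "2::real"] by (intro mult_right_mono) auto
  ultimately show ?thesis by linarith
qed

definition threshold_poly :: "nat \<Rightarrow> real \<Rightarrow> real poly" where
  "threshold_poly m T = monom 1 (2 * m + 1) + monom T (2 * m) - [:T * std_normal_even_moment m:]"

lemma poly_threshold_poly:
  "poly (threshold_poly m T) z = z ^ (2 * m) * (z + T) - T * std_normal_even_moment m"
  unfolding threshold_poly_def by (simp add: poly_monom algebra_simps)

lemma degree_threshold_poly: "degree (threshold_poly m T) \<le> 2 * m + 1"
  unfolding threshold_poly_def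
  by (intro degree_diff_le degree_add_le) (auto intro: order_trans[OF degree_monom_le])

lemma threshold_poly_le:
  assumes "1 \<le> T" "4 * T ^ (2 * m) \<le> std_normal_even_moment m" "z < T"
  shows "poly (threshold_poly m T) z \<le> - std_normal_even_moment m / 2"
proof -
  let ?\<mu> = "std_normal_even_moment m"
  have "z ^ (2 * m) * (z + T) \<le> T * ?\<mu> / 2"
  proof (cases "z \<le> - T")
    case True
    then have "z ^ (2 * m) * (z + T) \<le> 0"
      by (intro mult_nonneg_nonpos) (auto simp: zero_le_even_power)
    moreover have "0 \<le> T * ?\<mu>"
      using assms(1) std_normal_even_moment_pos[of m] by simp
    ultimately show ?thesis by linarith
  next
    case False
    with assms(3) have "\<bar>z\<bar> \<le> T" by auto
    then have "z ^ (2 * m) \<le> T ^ (2 * m)"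
      by (metis power_even_abs even_mult_iff even_numeral power_mono abs_ge_zero)
    then have "z ^ (2 * m) * (z + T) \<le> T ^ (2 * m) * (2 * T)"
      using False assms(3) by (intro mult_mono) (auto simp: zero_le_even_power)
    also have "\<dots> \<le> ?\<mu> / 4 * (2 * T)"
      using assms(1,2) by (intro mult_right_mono) auto
    finally show ?thesis by simp
  qed
  moreover have "?\<mu> \<le> T * ?\<mu>"
    using assms(1) std_normal_even_moment_pos[of m] by simp
  ultimately show ?thesis
    unfolding poly_threshold_poly by linarith
qed

lemma integral_threshold_poly: "(\<integral>z. poly (threshold_poly m T) z \<partial>gauss1) = 0"
proof -
  let ?\<mu> = "std_normal_even_moment m"
  have "has_bochner_integral gauss1 (\<lambda>z. z ^ (2 * m + 1) + T * z ^ (2 * m) - (T * ?\<mu>) * z ^ 0)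
      (0 + T * ?\<mu> - (T * ?\<mu>) * 1)"
    using has_bochner_integral_gauss1_power[of "2 * m + 1"]
      has_bochner_integral_gauss1_power[of "2 * m"] has_bochner_integral_gauss1_power[of 0]
    by (intro has_bochner_integral_add has_bochner_integral_diff has_bochner_integral_mult_right)
      simp_all
  then show ?thesis
    by (simp add: poly_threshold_poly algebra_simps has_bochner_integral_integral_eq)
qed

lemma integral_threshold_poly_square:
  "(\<integral>z. (poly (threshold_poly m T) z)\<^sup>2 \<partial>gauss1)
     = std_normal_even_moment (2 * m + 1) + T\<^sup>2 * std_normal_even_moment (2 * m)
       - T\<^sup>2 * (std_normal_even_moment m)\<^sup>2"
proof -
  let ?\<mu> = "std_normal_even_moment m"
  note moment = has_bochner_integral_gauss1_power
  have expand: "(poly (threshold_poly m T) z)\<^sup>2 = z ^ (4 * m + 2) + (2 * T) * z ^ (4 * m + 1)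
      + T\<^sup>2 * z ^ (4 * m) - (2 * T * ?\<mu>) * z ^ (2 * m + 1) - (2 * T\<^sup>2 * ?\<mu>) * z ^ (2 * m)
      + (T\<^sup>2 * ?\<mu>\<^sup>2) * z ^ 0" for z
  proof -
    have "z ^ (4 * m + 2) = z ^ (2 * m + 1) * z ^ (2 * m + 1)"
      "z ^ (4 * m + 1) = z ^ (2 * m + 1) * z ^ (2 * m)"
      "z ^ (4 * m) = z ^ (2 * m) * z ^ (2 * m)"
      by (simp_all add: power_add[symmetric])
    then show ?thesis
      unfolding poly_threshold_poly by (simp add: power2_eq_square algebra_simps)
  qed
  have "has_bochner_integral gauss1 (\<lambda>z. (poly (threshold_poly m T) z)\<^sup>2)
      (std_normal_even_moment (2 * m + 1) + (2 * T) * 0 + T\<^sup>2 * std_normal_even_moment (2 * m)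
       - (2 * T * ?\<mu>) * 0 - (2 * T\<^sup>2 * ?\<mu>) * ?\<mu> + (T\<^sup>2 * ?\<mu>\<^sup>2) * 1)"
    unfolding expand
    using moment[of "4 * m + 2"] moment[of "4 * m + 1"] moment[of "4 * m"]
      moment[of "2 * m + 1"] moment[of "2 * m"] moment[of 0]
    by (intro has_bochner_integral_add has_bochner_integral_diff has_bochner_integral_mult_right)
      simp_all
  then show ?thesis
    by (simp add: power2_eq_square algebra_simps has_bochner_integral_integral_eq)
qed

lemma integral_threshold_poly_square_bounds:
  assumes "T\<^sup>2 \<le> real m"
  shows "0 < (\<integral>z. (poly (threshold_poly m T) z)\<^sup>2 \<partial>gauss1)"
    and "sqrt (\<integral>z. (poly (threshold_poly m T) z)\<^sup>2 \<partial>gauss1) \<le> 32 ^ m * std_normal_even_moment m"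
proof -
  let ?\<mu> = "std_normal_even_moment"
  define V where "V = (\<integral>z. (poly (threshold_poly m T) z)\<^sup>2 \<partial>gauss1)"
  have V: "V = (4 * real m + 1) * ?\<mu> (2 * m) + T\<^sup>2 * (?\<mu> (2 * m) - (?\<mu> m)\<^sup>2)"
    using std_normal_even_moment_Suc[of "2 * m"]
    by (simp add: V_def integral_threshold_poly_square algebra_simps)
  have "0 < (4 * real m + 1) * ?\<mu> (2 * m)"
    using std_normal_even_moment_pos[of "2 * m"] by simp
  moreover have "0 \<le> T\<^sup>2 * (?\<mu> (2 * m) - (?\<mu> m)\<^sup>2)"
    using std_normal_even_moment_double(1)[of m] by simp
  ultimately show "0 < V" unfolding V by linarith
  have "V \<le> (4 * real m + 1 + T\<^sup>2) * ?\<mu> (2 * m)"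
    unfolding V by (simp add: algebra_simps)
  also have "\<dots> \<le> 6 ^ m * (4 ^ m * (?\<mu> m)\<^sup>2)"
    using assms Bernoulli_inequality[of "5::real" m] std_normal_even_moment_double(2)[of m]
      std_normal_even_moment_pos[of "2 * m"]
    by (intro mult_mono) auto
  also have "\<dots> = 24 ^ m * (?\<mu> m)\<^sup>2"
    by (simp add: power_mult_distrib[symmetric])
  also have "\<dots> \<le> (32 ^ m * 32 ^ m) * (?\<mu> m)\<^sup>2"
    by (intro mult_right_mono) (simp_all add: power_mult_distrib[symmetric] power_mono)
  also have "\<dots> = (32 ^ m * ?\<mu> m)\<^sup>2"
    by (simp add: power2_eq_square)
  finally show "sqrt V \<le> 32 ^ m * ?\<mu> m"
    using std_normal_even_moment_pos[of m] by (simp add: real_le_lsqrt)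
qed

lemma normalized_threshold_poly:
  assumes "1 \<le> T" "6 * T\<^sup>2 \<le> real m"
  defines "p \<equiv> smult (1 / sqrt (\<integral>z. (poly (threshold_poly m T) z)\<^sup>2 \<partial>gauss1)) (threshold_poly m T)"
  shows "degree p \<le> 2 * m + 1"
    and "(\<integral>z. poly p z \<partial>gauss1) = 0"
    and "(\<integral>z. (poly p z)\<^sup>2 \<partial>gauss1) = 1"
    and "z < T \<Longrightarrow> poly p z \<le> - (1 / 32 ^ m) / 2"
proof -
  define q where "q = threshold_poly m T"
  define V where "V = (\<integral>z. (poly q z)\<^sup>2 \<partial>gauss1)"
  define \<mu> where "\<mu> = std_normal_even_moment m"
  have p: "p = smult (1 / sqrt V) q"
    unfolding p_def V_def q_def ..
  have "T\<^sup>2 \<le> real m"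
    using assms(2) by simp
  then have V: "0 < V" "sqrt V \<le> 32 ^ m * \<mu>"
    using integral_threshold_poly_square_bounds[of T m] unfolding V_def q_def \<mu>_def by auto
  show "degree p \<le> 2 * m + 1"
    unfolding p q_def using degree_threshold_poly by simp
  show "(\<integral>z. poly p z \<partial>gauss1) = 0"
    unfolding p q_def by (simp add: integral_threshold_poly)
  have "(poly p z)\<^sup>2 = (poly q z)\<^sup>2 / V" for z
    unfolding p using V by (simp add: power_divide)
  then show "(\<integral>z. (poly p z)\<^sup>2 \<partial>gauss1) = 1"
    using V by (simp add: V_def)
  assume "z < T"
  then have "poly q z \<le> - \<mu> / 2"
    unfolding q_def \<mu>_def using threshold_poly_le power_le_std_normal_even_moment assms by auto
  then have "poly p z \<le> - (\<mu> / sqrt V) / 2"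
    unfolding p using V by (simp add: field_simps)
  also have "\<dots> \<le> - (1 / 32 ^ m) / 2"
    using V std_normal_even_moment_pos[of m] by (simp add: field_simps \<mu>_def)
  finally show "poly p z \<le> - (1 / 32 ^ m) / 2" .
qed

lemma exists_normalized_poly_negative_below:
  fixes t :: real
  shows "\<exists>p. real (degree p) \<le> 36 * (t\<^sup>2 + 1) \<and>
    (\<integral>z. poly p z \<partial>gauss1) = 0 \<and> (\<integral>z. (poly p z)\<^sup>2 \<partial>gauss1) = 1 \<and>
    (\<forall>z<t. poly p z \<le> - (2 powr (- 36 * (t\<^sup>2 + 1))) / 2)"
proof -
  define T where "T = max t 1"
  define m where "m = nat \<lceil>6 * T\<^sup>2\<rceil>"
  have T: "1 \<le> T" "t \<le> T" "T\<^sup>2 \<le> t\<^sup>2 + 1"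
    unfolding T_def by (auto simp: max_def)
  have m: "6 * T\<^sup>2 \<le> real m" "real m \<le> 6 * T\<^sup>2 + 1"
    unfolding m_def using real_nat_ceiling_ge[of "6 * T\<^sup>2"] by auto
  have "- 36 * (t\<^sup>2 + 1) \<le> - 5 * real m"
    using m T zero_le_power2[of t] unfolding distrib_left by linarith
  then have "2 powr (- 36 * (t\<^sup>2 + 1)) \<le> 2 powr (- 5 * real m)"
    by (rule powr_mono) simp
  also have "\<dots> = 1 / 32 ^ m"
    by (simp add: powr_minus powr_realpow[symmetric] powr_powr[symmetric] divide_inverse)
  finally have margin: "2 powr (- 36 * (t\<^sup>2 + 1)) \<le> 1 / 32 ^ m" .
  obtain p where deg: "degree p \<le> 2 * m + 1"
    and mean: "(\<integral>z. poly p z \<partial>gauss1) = 0" and var: "(\<integral>z. (poly p z)\<^sup>2 \<partial>gauss1) = 1"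
    and neg: "\<And>z. z < T \<Longrightarrow> poly p z \<le> - (1 / 32 ^ m) / 2"
    using normalized_threshold_poly[OF T(1) m(1)] by blast
  show ?thesis
  proof (intro exI[of _ p] conjI allI impI mean var)
    have "real (degree p) \<le> 2 * real m + 1"
      using of_nat_mono[OF deg, where 'a = real] by simp
    then show "real (degree p) \<le> 36 * (t\<^sup>2 + 1)"
      using m T zero_le_power2[of t] unfolding distrib_left by linarith
    fix z assume "z < t"
    with T(2) margin neg[of z] show "poly p z \<le> - (2 powr (- 36 * (t\<^sup>2 + 1))) / 2"
      by simp
  qed
qed

lemma AE_reliable:
  assumes "finite_measure D" "reliable D f"
    and "{z \<in> space D. f (fst z) = 1 \<and> snd z = -1} \<in> sets D"
  shows "AE z in D. snd z = -1 \<longrightarrow> f (fst z) \<noteq> 1"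
proof -
  have "emeasure D {z \<in> space D. f (fst z) = 1 \<and> snd z = -1} = 0"
    using assms(1,2) by (simp add: reliable_def finite_measure.emeasure_eq_measure)
  then show ?thesis
    by (subst AE_iff_measurable[OF assms(3)]) auto
qed

lemma integral_label_mult_ge:
  fixes f Y :: "'a \<Rightarrow> real"
  assumes "finite_measure M"
    and f: "integrable M f" "(\<integral>x. f x \<partial>M) = 0"
    and Y: "Y \<in> borel_measurable M" "AE x in M. Y x \<in> {-1, 1}"
    and neg: "AE x in M. Y x = -1 \<longrightarrow> f x \<le> - c / 2"
  shows "c * measure M {x \<in> space M. Y x = -1} \<le> (\<integral>x. Y x * f x \<partial>M)"
proof -
  interpret finite_measure M by fact
  define A where "A = {x \<in> space M. Y x = -1}"
  have A: "A \<in> sets M"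
    unfolding A_def using Y(1) by measurable
  have indicator: "integrable M (indicator A :: 'a \<Rightarrow> real)"
    using A by (intro integrable_real_indicator) (auto simp: emeasure_eq_measure)
  have "c * measure M A = (\<integral>x. f x + c * indicator A x \<partial>M)"
    using f indicator A by simp
  also have "\<dots> \<le> (\<integral>x. Y x * f x \<partial>M)"
  proof (rule integral_mono_AE)
    show "integrable M (\<lambda>x. f x + c * indicator A x)"
      using f indicator by simp
    have "(\<lambda>x. Y x * f x) \<in> borel_measurable M"
      using Y(1) borel_measurable_integrable[OF f(1)] by measurable
    moreover have "AE x in M. norm (Y x * f x) \<le> norm (f x)"
      using Y(2) by eventually_elim (auto simp: abs_mult)
    ultimately show "integrable M (\<lambda>x. Y x * f x)"
      by (rule Bochner_Integration.integrable_bound[OF f(1)])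
    \<comment> \<open>on \<open>Y = -1\<close>, \<open>Y f = f - 2 f \<ge> f + c\<close>\<close>
    show "AE x in M. f x + c * indicator A x \<le> Y x * f x"
      using Y(2) neg AE_space by eventually_elim (auto simp: A_def indicator_def)
  qed
  finally show ?thesis unfolding A_def .
qed

lemma AE_reliable_halfspace:
  assumes "finite_measure D" "reliable D (halfspace d w t)"
    and [measurable]: "(\<lambda>z. inner_d d w (fst z)) \<in> borel_measurable D" "snd \<in> borel_measurable D"
  shows "AE z in D. snd z = -1 \<longrightarrow> inner_d d w (fst z) < t"
proof -
  have "{z \<in> space D. halfspace d w t (fst z) = 1 \<and> snd z = -1}
      = {z \<in> space D. t \<le> inner_d d w (fst z) \<and> snd z = -1}"
    by (auto simp: halfspace_def)
  also have "\<dots> \<in> sets D" by measurable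
  finally have "AE z in D. snd z = -1 \<longrightarrow> halfspace d w t (fst z) \<noteq> 1"
    by (rule AE_reliable[OF assms(1,2)])
  then show ?thesis
    by eventually_elim (auto simp: halfspace_def split: if_splits)
qed

lemma reliable_halfspace_correlation_ge:
  fixes D :: "((nat \<Rightarrow> real) \<times> real) measure" and p :: "real poly"
  assumes D: "prob_space D" and sets: "sets D = sets (gauss_vec d \<Otimes>\<^sub>M borel)"
    and marginal: "distr D (gauss_vec d) fst = gauss_vec d"
    and labels: "AE z in D. snd z \<in> {-1, 1}"
    and unit: "(\<Sum>i<d. (w i)\<^sup>2) = 1" and reliable: "reliable D (halfspace d w t)"
    and mean: "(\<integral>z. poly p z \<partial>gauss1) = 0"
    and neg: "\<And>z. z < t \<Longrightarrow> poly p z \<le> - c / 2"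
  shows "c * measure D {z \<in> space D. snd z = -1}
    \<le> (\<integral>z. snd z * poly p (inner_d d w (fst z)) \<partial>D)"
proof -
  interpret prob_space D by (rule D)
  define Z where "Z z = inner_d d w (fst z)" for z :: "(nat \<Rightarrow> real) \<times> real"
  have Z: "Z \<in> borel_measurable D" and distr_Z: "distr D borel Z = gauss1"
    using inner_d_fst_std_normal[OF sets marginal unit] unfolding Z_def[abs_def] by auto
  have snd: "snd \<in> borel_measurable D"
    by (subst measurable_cong_sets[OF sets refl]) (rule measurable_snd)
  have poly_borel: "poly p \<in> borel_measurable borel"
    by (intro borel_measurable_continuous_onI continuous_intros)
  have "integrable D (\<lambda>z. poly p (Z z))"
    using integrable_distr_eq[OF Z poly_borel] distr_Z integrable_gauss1_poly by simp
  moreover have "(\<integral>z. poly p (Z z) \<partial>D) = 0"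
    using integral_distr[OF Z poly_borel] distr_Z mean by simp
  moreover have "AE z in D. snd z = -1 \<longrightarrow> poly p (Z z) \<le> - c / 2"
    using AE_reliable_halfspace[OF finite_measure_axioms reliable Z[unfolded Z_def[abs_def]] snd]
    by eventually_elim (auto simp: Z_def dest: neg)
  ultimately have "c * measure D {z \<in> space D. snd z = -1} \<le> (\<integral>z. snd z * poly p (Z z) \<partial>D)"
    using snd by (intro integral_label_mult_ge[OF finite_measure_axioms _ _ _ labels]) auto
  then show ?thesis by (simp add: Z_def)
qed

theorem lemma2p2:
  shows "\<exists>C>0. \<forall>(d::nat) (D::((nat \<Rightarrow> real) \<times> real) measure) (w::nat \<Rightarrow> real) (t::real).
     prob_space D \<and>
     sets D = sets (gauss_vec d \<Otimes>\<^sub>M borel) \<and>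
     distr D (gauss_vec d) fst = gauss_vec d \<and>
     (AE z in D. snd z \<in> {-1, 1}) \<and>
     (\<Sum>i<d. (w i)\<^sup>2) = 1 \<and>
     reliable D (halfspace d w t)
     \<longrightarrow> (\<exists>p::real poly.
            real (degree p) \<le> C * (t\<^sup>2 + 1) \<and>
            (\<integral>z. poly p z \<partial>gauss1) = 0 \<and>
            (\<integral>z. (poly p z)\<^sup>2 \<partial>gauss1) = 1 \<and>
            (\<integral>z. snd z * poly p (inner_d d w (fst z)) \<partial>D)
              \<ge> 2 powr (- C * (t\<^sup>2 + 1)) * measure D {z \<in> space D. snd z = -1})"
proof (intro exI[of _ "36::real"] conjI allI impI)
  show "(0::real) < 36" by simp
next
  fix d D w t
  assume "prob_space D \<and> sets D = sets (gauss_vec d \<Otimes>\<^sub>M borel) \<and>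
    distr D (gauss_vec d) fst = gauss_vec d \<and> (AE z in D. snd z \<in> {-1, 1}) \<and>
    (\<Sum>i<d. (w i)\<^sup>2) = 1 \<and> reliable D (halfspace d w t)"
  moreover obtain p :: "real poly" where "real (degree p) \<le> 36 * (t\<^sup>2 + 1)"
    and "(\<integral>z. poly p z \<partial>gauss1) = 0" "(\<integral>z. (poly p z)\<^sup>2 \<partial>gauss1) = 1"
    and "\<And>z. z < t \<Longrightarrow> poly p z \<le> - (2 powr (- 36 * (t\<^sup>2 + 1))) / 2"
    using exists_normalized_poly_negative_below[of t] by blast
  ultimately show "\<exists>p. real (degree p) \<le> 36 * (t\<^sup>2 + 1) \<and>
      (\<integral>z. poly p z \<partial>gauss1) = 0 \<and> (\<integral>z. (poly p z)\<^sup>2 \<partial>gauss1) = 1 \<and>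
      2 powr (- 36 * (t\<^sup>2 + 1)) * measure D {z \<in> space D. snd z = -1}
        \<le> (\<integral>z. snd z * poly p (inner_d d w (fst z)) \<partial>D)"
    using reliable_halfspace_correlation_ge by blast
qed

end
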